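(* For every $d\geq 3$, \[ \mathscr{A}(\otimes_{j=1}^d\mathbb{R}^4)=\frac{1}{\sqrt{4^{d-1}}}<\mathscr{A}(\mathrm{Sym}^d(\mathbb{R}^4)) \qquad\text{and}\qquad \mathscr{A}(\otimes_{j=1}^d\mathbb{R}^8)=\frac{1}{\sqrt{8^{d-1}}}<\mathscr{A}(\mathrm{Sym}^d(\mathbb{R}^8)). \]
   Context: Norms on real $n^d$-tensors: \begin{itemize} \item The Frobenius norm is $\|A\|_F=(\sum a_{i_1\dots i_d}^2)^{1/2}$. \item The spectral norm is $\|A\|_2=\max_{\|x^{(j)}\|=1}\sum a_{i_1\dots i_d}x^{(1)}_{i_1}\cdots x^{(d)}_{i_d}$. \end{itemize} For a linear subspace $V$ (the full tensor space $\otimes_{j=1}^d\mathbb{R}^n$ or the space $\mathrm{Sym}^d(\mathbb{R}^n)$ of symmetric tensors), the best rank-one approximation ratio is $\mathscr{A}(V)=\min_{0\neq A\in V}\|A\|_2/\|A\|_F$. *)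

theory Defs
  imports "HOL-Analysis.Analysis"
begin

text \<open>Real tensors of order d over R^n, represented as functions on multi-indices
  (lists of length d with entries < n), vanishing outside the index set.\<close>

definition tidx :: "nat \<Rightarrow> nat \<Rightarrow> nat list set" where
  "tidx n d = {is. length is = d \<and> (\<forall>i\<in>set is. i < n)}"

definition tensors :: "nat \<Rightarrow> nat \<Rightarrow> (nat list \<Rightarrow> real) set" where
  "tensors n d = {A. \<forall>is. is \<notin> tidx n d \<longrightarrow> A is = 0}"

definition sym_tensors :: "nat \<Rightarrow> nat \<Rightarrow> (nat list \<Rightarrow> real) set" where
  "sym_tensors n d = {A \<in> tensors n d. \<forall>is\<in>tidx n d. \<forall>p. p permutes {..<d} \<longrightarrow>
       A is = A (map (\<lambda>k. is ! p k) [0..<d])}"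

definition frob_norm :: "nat \<Rightarrow> nat \<Rightarrow> (nat list \<Rightarrow> real) \<Rightarrow> real" where
  "frob_norm n d A = sqrt (\<Sum>is\<in>tidx n d. (A is)\<^sup>2)"

definition spec_norm :: "nat \<Rightarrow> nat \<Rightarrow> (nat list \<Rightarrow> real) \<Rightarrow> real" where
  "spec_norm n d A = Sup ((\<lambda>x. \<Sum>is\<in>tidx n d. A is * (\<Prod>j<d. x j (is ! j)))
       ` {x :: nat \<Rightarrow> nat \<Rightarrow> real. \<forall>j<d. (\<Sum>i<n. (x j i)\<^sup>2) = 1})"

definition best_r1_ratio :: "nat \<Rightarrow> nat \<Rightarrow> (nat list \<Rightarrow> real) set \<Rightarrow> real" where
  "best_r1_ratio n d V = Inf ((\<lambda>A. spec_norm n d A / frob_norm n d A) ` (V - {\<lambda>_. 0}))"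

end

theory Submission
  imports Defs
begin

text \<open>Every fiber \<open>A(i\<^sub>1,\<dots>,i\<^sub>d\<^sub>-\<^sub>1,\<cdot>)\<close> of an order-\<open>d\<close> tensor has Euclidean norm
  at most \<open>\<parallel>A\<parallel>\<^sub>2\<close>, hence \<open>\<parallel>A\<parallel>\<^sub>F\<^sup>2 \<le> n\<^sup>d\<^sup>-\<^sup>1 \<parallel>A\<parallel>\<^sub>2\<^sup>2\<close>. For \<open>n = 4, 8\<close> equality is
  attained by the tensor of right-nested quaternion resp. octonion multiplication,
  \<open>(e\<^sub>i\<^sub>1(e\<^sub>i\<^sub>2(\<dots> e\<^sub>i\<^sub>d\<^sub>-\<^sub>1)))\<^sub>k\<close>: all its fibers are unit vectors, and since the norm is
  multiplicative its contraction with unit vectors \<open>x\<^sub>1,\<dots>,x\<^sub>d\<^sub>-\<^sub>1\<close> is the unit vector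
  \<open>x\<^sub>1(x\<^sub>2(\<dots> x\<^sub>d\<^sub>-\<^sub>1))\<close>, so its spectral norm is at most 1.

  A symmetric tensor cannot have all fibers of maximal norm. Testing with
  \<open>(e\<^sub>p \<plusminus> e\<^sub>q)/\<surd>2\<close> in the first two slots bounds \<open>\<parallel>A(p,p,0,\<dots>,\<cdot>) + A(q,q,0,\<dots>,\<cdot>)\<parallel>\<^sup>2\<close>
  by four times the deficit \<open>\<parallel>A\<parallel>\<^sub>2\<^sup>2 - \<parallel>A(p,q,0,\<dots>,\<cdot>)\<parallel>\<^sup>2\<close>; combining the pairs from
  \<open>{0,1,2}\<close> gives \<open>3\<parallel>A\<parallel>\<^sub>F\<^sup>2 \<le> (3n\<^sup>d\<^sup>-\<^sup>1 - 1)\<parallel>A\<parallel>\<^sub>2\<^sup>2\<close>.\<close>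

definition unit_vec :: "nat \<Rightarrow> nat \<Rightarrow> real" where
  "unit_vec i = (\<lambda>k. if k = i then 1 else 0)"

definition sqnorm :: "nat \<Rightarrow> (nat \<Rightarrow> real) \<Rightarrow> real" where
  "sqnorm n v = (\<Sum>k<n. (v k)\<^sup>2)"

definition unit_tuples :: "nat \<Rightarrow> nat \<Rightarrow> (nat \<Rightarrow> nat \<Rightarrow> real) set" where
  "unit_tuples n d = {x. \<forall>j<d. sqnorm n (x j) = 1}"

definition tensor_form :: "nat \<Rightarrow> nat \<Rightarrow> (nat list \<Rightarrow> real) \<Rightarrow> (nat \<Rightarrow> nat \<Rightarrow> real) \<Rightarrow> real" where
  "tensor_form n d A x = (\<Sum>is\<in>tidx n d. A is * (\<Prod>j<d. x j (is ! j)))"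

definition contract :: "nat \<Rightarrow> nat \<Rightarrow> (nat list \<Rightarrow> real) \<Rightarrow> (nat \<Rightarrow> nat \<Rightarrow> real) \<Rightarrow> nat \<Rightarrow> real" where
  "contract n m A y = (\<lambda>k. \<Sum>ps\<in>tidx n m. (\<Prod>j<m. y j (ps ! j)) * A (ps @ [k]))"

definition fiber :: "(nat list \<Rightarrow> real) \<Rightarrow> nat list \<Rightarrow> nat \<Rightarrow> real" where
  "fiber A ps = (\<lambda>k. A (ps @ [k]))"

section \<open>Multi-indices\<close>

lemma tidx_0: "tidx n 0 = {[]}"
  by (auto simp: tidx_def)

lemma length_tidx: "is \<in> tidx n d \<Longrightarrow> length is = d"
  by (simp add: tidx_def)

lemma nth_tidx_less: "is \<in> tidx n d \<Longrightarrow> j < d \<Longrightarrow> is ! j < n"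
  by (auto simp: tidx_def)

lemma snoc_in_tidx: "is \<in> tidx n d \<Longrightarrow> k < n \<Longrightarrow> is @ [k] \<in> tidx n (Suc d)"
  by (auto simp: tidx_def)

lemma finite_tidx: "finite (tidx n d)"
proof -
  have "tidx n d = {is. set is \<subseteq> {..<n} \<and> length is = d}"
    by (auto simp: tidx_def)
  then show ?thesis
    by (simp add: finite_lists_length_eq)
qed

lemma tidx_Suc_snoc: "tidx n (Suc d) = (\<lambda>(ps, k). ps @ [k]) ` (tidx n d \<times> {..<n})"
proof (intro equalityI subsetI)
  fix ix assume "ix \<in> tidx n (Suc d)"
  moreover from this obtain ps k where "ix = ps @ [k]"
    by (metis length_tidx rev_exhaust Zero_not_Suc list.size(3))
  ultimately show "ix \<in> (\<lambda>(ps, k). ps @ [k]) ` (tidx n d \<times> {..<n})"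
    by (auto simp: tidx_def)
qed (auto simp: tidx_def)

lemma tidx_Suc_Cons: "tidx n (Suc d) = (\<lambda>(i, ps). i # ps) ` ({..<n} \<times> tidx n d)"
proof (intro equalityI subsetI)
  fix ix assume "ix \<in> tidx n (Suc d)"
  moreover from this obtain i ps where "ix = i # ps"
    by (cases ix) (auto simp: tidx_def)
  ultimately show "ix \<in> (\<lambda>(i, ps). i # ps) ` ({..<n} \<times> tidx n d)"
    by (auto simp: tidx_def)
qed (auto simp: tidx_def)

lemma sum_tidx_Suc_snoc:
  "(\<Sum>is\<in>tidx n (Suc d). f is) = (\<Sum>ps\<in>tidx n d. \<Sum>k<n. f (ps @ [k]))"
proof -
  have "inj_on (\<lambda>(ps, k). ps @ [k]) (tidx n d \<times> {..<n})"
    by (auto simp: inj_on_def)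
  then show ?thesis
    by (simp add: tidx_Suc_snoc sum.reindex sum.cartesian_product case_prod_unfold)
qed

lemma sum_tidx_Suc_Cons:
  "(\<Sum>is\<in>tidx n (Suc d). f is) = (\<Sum>i<n. \<Sum>ps\<in>tidx n d. f (i # ps))"
proof -
  have "inj_on (\<lambda>(i, ps). i # ps) ({..<n} \<times> tidx n d)"
    by (auto simp: inj_on_def)
  then show ?thesis
    by (simp add: tidx_Suc_Cons sum.reindex sum.cartesian_product case_prod_unfold)
qed

lemma card_tidx: "card (tidx n d) = n ^ d"
proof (induction d)
  case (Suc d)
  have "inj_on (\<lambda>(ps, k). ps @ [k]) (tidx n d \<times> {..<n})"
    by (auto simp: inj_on_def)
  then show ?case
    by (simp add: tidx_Suc_snoc card_image card_cartesian_product Suc)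
qed (simp add: tidx_0)

section \<open>Fibers and the spectral norm\<close>

lemma spec_norm_eq_Sup: "spec_norm n d A = Sup (tensor_form n d A ` unit_tuples n d)"
  by (simp add: spec_norm_def tensor_form_def unit_tuples_def sqnorm_def)

lemma sqnorm_nonneg: "0 \<le> sqnorm n v"
  by (simp add: sqnorm_def sum_nonneg)

lemma sqnorm_cong: "(\<And>k. k < n \<Longrightarrow> v k = w k) \<Longrightarrow> sqnorm n v = sqnorm n w"
  unfolding sqnorm_def by (intro sum.cong) auto

lemma sqnorm_two_unit_vecs:
  assumes "p < n" "q < n" "p \<noteq> q"
  shows "sqnorm n (\<lambda>i. a * unit_vec p i + b * unit_vec q i) = a\<^sup>2 + b\<^sup>2"
proof -
  have "sqnorm n (\<lambda>i. a * unit_vec p i + b * unit_vec q i)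
      = (\<Sum>i<n. (if i = p then a\<^sup>2 else 0) + (if i = q then b\<^sup>2 else 0))"
    unfolding sqnorm_def by (intro sum.cong) (use assms in \<open>auto simp: unit_vec_def\<close>)
  then show ?thesis
    using assms by (simp add: sum.distrib)
qed

lemma sqnorm_unit_vec: "i < n \<Longrightarrow> sqnorm n (unit_vec i) = 1"
  unfolding sqnorm_def unit_vec_def by (simp add: if_distrib[of "\<lambda>x. x\<^sup>2"] cong: if_cong)

lemma unit_tuples_nonempty: "0 < n \<Longrightarrow> (\<lambda>_. unit_vec 0) \<in> unit_tuples n d"
  by (simp add: unit_tuples_def sqnorm_unit_vec)

lemma tensor_form_Suc:
  "tensor_form n (Suc m) A x = (\<Sum>k<n. x m k * contract n m A x k)"
proof -
  have "tensor_form n (Suc m) A x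
      = (\<Sum>ps\<in>tidx n m. \<Sum>k<n. x m k * ((\<Prod>j<m. x j (ps ! j)) * A (ps @ [k])))"
    unfolding tensor_form_def sum_tidx_Suc_snoc
    by (intro sum.cong refl) (simp add: length_tidx nth_append)
  then show ?thesis
    by (simp add: contract_def sum_distrib_left sum.swap[of _ "tidx n m"])
qed

lemma contract_cong: "(\<And>j. j < m \<Longrightarrow> y j = y' j) \<Longrightarrow> contract n m A y = contract n m A y'"
  unfolding contract_def by (intro ext sum.cong refl arg_cong2[where f="(*)"] prod.cong) auto

lemma tensor_form_le_sum_abs:
  assumes x: "x \<in> unit_tuples n d"
  shows "tensor_form n d A x \<le> (\<Sum>is\<in>tidx n d. \<bar>A is\<bar>)"
proof -
  have coord: "\<bar>x j i\<bar> \<le> 1" if "j < d" "i < n" for i j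
  proof -
    have "(x j i)\<^sup>2 \<le> sqnorm n (x j)"
      unfolding sqnorm_def by (rule member_le_sum) (use that in auto)
    then show ?thesis
      using x that by (simp add: unit_tuples_def abs_square_le_1)
  qed
  have "tensor_form n d A x \<le> (\<Sum>is\<in>tidx n d. \<bar>A is * (\<Prod>j<d. x j (is ! j))\<bar>)"
    unfolding tensor_form_def by (rule order_trans[OF abs_ge_self sum_abs])
  also have "\<dots> \<le> (\<Sum>is\<in>tidx n d. \<bar>A is\<bar>)"
  proof (rule sum_mono)
    fix ix assume "ix \<in> tidx n d"
    then have "(\<Prod>j<d. \<bar>x j (ix ! j)\<bar>) \<le> 1"
      by (intro prod_le_1) (auto intro: coord nth_tidx_less)
    then show "\<bar>A ix * (\<Prod>j<d. x j (ix ! j))\<bar> \<le> \<bar>A ix\<bar>"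
      by (simp add: abs_mult abs_prod mult_left_le)
  qed
  finally show ?thesis .
qed

lemma tensor_form_le_spec_norm: "x \<in> unit_tuples n d \<Longrightarrow> tensor_form n d A x \<le> spec_norm n d A"
  unfolding spec_norm_eq_Sup
  by (rule cSup_upper) (auto intro!: bdd_aboveI tensor_form_le_sum_abs)

lemma spec_norm_le:
  "0 < n \<Longrightarrow> (\<And>x. x \<in> unit_tuples n d \<Longrightarrow> tensor_form n d A x \<le> c) \<Longrightarrow> spec_norm n d A \<le> c"
  unfolding spec_norm_eq_Sup by (rule cSup_least) (auto dest: unit_tuples_nonempty)

lemma spec_norm_nonneg:
  assumes "0 < n"
  shows "0 \<le> spec_norm n (Suc m) A"
proof -
  define x where "x = (\<lambda>_::nat. unit_vec 0)"
  define x' where "x' = x(m := (\<lambda>i. - x m i))"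
  have x: "x \<in> unit_tuples n (Suc m)"
    using unit_tuples_nonempty[OF assms] by (simp add: x_def)
  then have x': "x' \<in> unit_tuples n (Suc m)"
    by (auto simp: unit_tuples_def sqnorm_def x'_def)
  have "contract n m A x' = contract n m A x"
    by (rule contract_cong) (simp add: x'_def)
  then have "tensor_form n (Suc m) A x' = - tensor_form n (Suc m) A x"
    by (simp add: tensor_form_Suc x'_def sum_negf)
  with tensor_form_le_spec_norm[OF x, of A] tensor_form_le_spec_norm[OF x', of A]
  show ?thesis by linarith
qed

text \<open>Choosing the last vector parallel to the contraction makes the form equal to its norm.\<close>

lemma sqnorm_contract_le_spec_norm:
  assumes y: "\<And>j. j < m \<Longrightarrow> sqnorm n (y j) = 1"
  shows "sqnorm n (contract n m A y) \<le> (spec_norm n (Suc m) A)\<^sup>2"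
proof (cases "sqnorm n (contract n m A y) = 0")
  case False
  define g where "g = contract n m A y"
  define r where "r = sqnorm n g"
  have r: "0 < r" using False sqnorm_nonneg[of n g] by (simp add: r_def g_def)
  define x where "x = y(m := (\<lambda>k. g k / sqrt r))"
  have "sqnorm n (\<lambda>k. g k / sqrt r) = 1"
    using r by (simp add: sqnorm_def power_divide sum_divide_distrib[symmetric] r_def)
  then have x: "x \<in> unit_tuples n (Suc m)"
    using y by (auto simp: unit_tuples_def x_def less_Suc_eq)
  have "contract n m A x = g"
    unfolding g_def by (rule contract_cong) (simp add: x_def)
  then have "tensor_form n (Suc m) A x = r / sqrt r"
    by (simp add: tensor_form_Suc x_def sum_divide_distrib[symmetric] r_def sqnorm_def
        power2_eq_square)
  then have "sqrt r \<le> spec_norm n (Suc m) A"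
    using tensor_form_le_spec_norm[OF x, of A] r by (simp add: real_div_sqrt)
  then have "(sqrt r)\<^sup>2 \<le> (spec_norm n (Suc m) A)\<^sup>2"
    by (rule power_mono) (use r in simp)
  then show ?thesis using r by (simp add: r_def g_def)
qed simp

lemma contract_unit_vecs:
  assumes ps: "ps \<in> tidx n m"
  shows "contract n m A (\<lambda>j. unit_vec (ps ! j)) = fiber A ps"
proof
  fix k
  have "(\<Prod>j<m. unit_vec (ps ! j) (qs ! j)) = (if qs = ps then 1 else 0)"
    if qs: "qs \<in> tidx n m" for qs
  proof (cases "qs = ps")
    case False
    moreover have "length qs = length ps"
      using ps qs by (simp add: length_tidx)
    ultimately obtain j where "j < m" "qs ! j \<noteq> ps ! j"
      using nth_equalityI length_tidx[OF ps] by metis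
    with False show ?thesis
      by (simp add: prod_zero unit_vec_def) (metis lessThan_iff)
  qed (simp add: unit_vec_def)
  then show "contract n m A (\<lambda>j. unit_vec (ps ! j)) k = fiber A ps k"
    using ps by (simp add: contract_def fiber_def if_distrib[of "\<lambda>c. c * _"] finite_tidx
        cong: sum.cong if_cong)
qed

lemma sqnorm_fiber_le_spec_norm:
  assumes "ps \<in> tidx n m"
  shows "sqnorm n (fiber A ps) \<le> (spec_norm n (Suc m) A)\<^sup>2"
proof -
  have "sqnorm n (contract n m A (\<lambda>j. unit_vec (ps ! j))) \<le> (spec_norm n (Suc m) A)\<^sup>2"
    by (rule sqnorm_contract_le_spec_norm) (simp add: nth_tidx_less[OF assms] sqnorm_unit_vec)
  then show ?thesis
    by (simp add: assms contract_unit_vecs)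
qed

lemma frob_norm_sq: "(frob_norm n (Suc m) A)\<^sup>2 = (\<Sum>ps\<in>tidx n m. sqnorm n (fiber A ps))"
  unfolding frob_norm_def by (simp add: sum_nonneg sum_tidx_Suc_snoc sqnorm_def fiber_def)

lemma frob_norm_sq_le: "(frob_norm n (Suc m) A)\<^sup>2 \<le> real n ^ m * (spec_norm n (Suc m) A)\<^sup>2"
proof -
  have "(frob_norm n (Suc m) A)\<^sup>2 \<le> (\<Sum>ps\<in>tidx n m. (spec_norm n (Suc m) A)\<^sup>2)"
    unfolding frob_norm_sq by (intro sum_mono sqnorm_fiber_le_spec_norm)
  then show ?thesis
    by (simp add: card_tidx)
qed

lemma frob_norm_pos:
  assumes "A \<in> tensors n d" "A \<noteq> (\<lambda>_. 0)"
  shows "0 < frob_norm n d A"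
proof -
  obtain ix where a: "A ix \<noteq> 0" using assms(2) by auto
  then have "ix \<in> tidx n d" using assms(1) by (auto simp: tensors_def)
  then have "(A ix)\<^sup>2 \<le> (\<Sum>is\<in>tidx n d. (A is)\<^sup>2)"
    by (intro member_le_sum) (auto simp: finite_tidx)
  moreover have "0 < (A ix)\<^sup>2"
    using a by simp
  ultimately have "0 < (\<Sum>is\<in>tidx n d. (A is)\<^sup>2)"
    by linarith
  then show ?thesis
    unfolding frob_norm_def by simp
qed

lemma spec_frob_ratio_ge:
  assumes n: "0 < n" and A: "A \<in> tensors n (Suc m)" "A \<noteq> (\<lambda>_. 0)"
  shows "1 / sqrt (real n ^ m) \<le> spec_norm n (Suc m) A / frob_norm n (Suc m) A"
proof -
  let ?s = "spec_norm n (Suc m) A" and ?F = "frob_norm n (Suc m) A"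
  have F: "0 < ?F" by (rule frob_norm_pos[OF A])
  have "?F\<^sup>2 \<le> (sqrt (real n ^ m) * ?s)\<^sup>2"
    using frob_norm_sq_le[of n m A] by (simp add: power_mult_distrib)
  then have "?F \<le> sqrt (real n ^ m) * ?s"
    by (rule power2_le_imp_le) (simp add: spec_norm_nonneg[OF n])
  then show ?thesis
    using F n by (simp add: field_simps)
qed

lemma best_r1_ratio_ge:
  assumes "V - {\<lambda>_. 0} \<noteq> {}"
    and "\<And>A. A \<in> V \<Longrightarrow> A \<noteq> (\<lambda>_. 0) \<Longrightarrow> c \<le> spec_norm n d A / frob_norm n d A"
  shows "c \<le> best_r1_ratio n d V"
  unfolding best_r1_ratio_def by (rule cInf_greatest) (use assms in auto)

lemma best_r1_ratio_le:
  assumes "0 < n" "A \<in> V" "A \<noteq> (\<lambda>_. 0)"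
  shows "best_r1_ratio n (Suc m) V \<le> spec_norm n (Suc m) A / frob_norm n (Suc m) A"
  unfolding best_r1_ratio_def
proof (rule cInf_lower)
  show "bdd_below ((\<lambda>A. spec_norm n (Suc m) A / frob_norm n (Suc m) A) ` (V - {\<lambda>_. 0}))"
    by (intro bdd_belowI[where m=0])
      (auto intro!: divide_nonneg_nonneg sum_nonneg spec_norm_nonneg[OF assms(1)] simp: frob_norm_def)
qed (use assms in auto)

section \<open>Tensors of composition algebras\<close>

definition bilinear_mult ::
  "nat \<Rightarrow> (nat \<Rightarrow> nat \<Rightarrow> nat \<Rightarrow> real) \<Rightarrow> (nat \<Rightarrow> real) \<Rightarrow> (nat \<Rightarrow> real) \<Rightarrow> nat \<Rightarrow> real" where
  "bilinear_mult n C x y = (\<lambda>k. \<Sum>i<n. \<Sum>j<n. x i * y j * C i j k)"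

fun mult_list ::
  "((nat \<Rightarrow> real) \<Rightarrow> (nat \<Rightarrow> real) \<Rightarrow> nat \<Rightarrow> real) \<Rightarrow> (nat \<Rightarrow> real) list \<Rightarrow> nat \<Rightarrow> real" where
  "mult_list mul [] = (\<lambda>_. 0)"
| "mult_list mul [x] = x"
| "mult_list mul (x # y # xs) = mul x (mult_list mul (y # xs))"

definition product_tensor :: "nat \<Rightarrow> (nat \<Rightarrow> nat \<Rightarrow> nat \<Rightarrow> real) \<Rightarrow> nat \<Rightarrow> nat list \<Rightarrow> real" where
  "product_tensor n C d = (\<lambda>is. if is \<in> tidx n d
     then mult_list (bilinear_mult n C) (map unit_vec (butlast is)) (last is) else 0)"

lemma mult_list_Cons: "xs \<noteq> [] \<Longrightarrow> mult_list mul (x # xs) = mul x (mult_list mul xs)"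
  by (cases xs) auto

lemma bilinear_mult_unit_vec:
  assumes "i < n"
  shows "bilinear_mult n C (unit_vec i) v k = (\<Sum>j<n. v j * C i j k)"
proof -
  have "bilinear_mult n C (unit_vec i) v k = (\<Sum>i'<n. if i' = i then \<Sum>j<n. v j * C i j k else 0)"
    unfolding bilinear_mult_def unit_vec_def by (intro sum.cong) auto
  then show ?thesis
    using assms by simp
qed

lemma product_tensor_in_tensors: "product_tensor n C d \<in> tensors n d"
  by (simp add: product_tensor_def tensors_def)

lemma fiber_product_tensor:
  "ps \<in> tidx n m \<Longrightarrow> k < n
   \<Longrightarrow> fiber (product_tensor n C (Suc m)) ps k = mult_list (bilinear_mult n C) (map unit_vec ps) k"
  by (simp add: product_tensor_def fiber_def snoc_in_tidx)

lemma mult_list_multilinear: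
  "k < n \<Longrightarrow> (\<Sum>ps\<in>tidx n (Suc m). (\<Prod>j<Suc m. x j (ps ! j)) * mult_list (bilinear_mult n C) (map unit_vec ps) k)
     = mult_list (bilinear_mult n C) (map x [0..<Suc m]) k"
proof (induction m arbitrary: x k)
  case 0
  then show ?case
    by (simp add: sum_tidx_Suc_Cons tidx_0 unit_vec_def if_distrib[of "\<lambda>c. _ * c"]
        cong: sum.cong if_cong)
next
  case (Suc m)
  let ?x' = "\<lambda>j. x (Suc j)" and ?P = "mult_list (bilinear_mult n C)"
  have "(\<Sum>ps\<in>tidx n (Suc (Suc m)). (\<Prod>j<Suc (Suc m). x j (ps ! j)) * ?P (map unit_vec ps) k)
     = (\<Sum>i<n. \<Sum>ps\<in>tidx n (Suc m). x 0 i * (\<Prod>j<Suc m. ?x' j (ps ! j))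
          * (\<Sum>j<n. ?P (map unit_vec ps) j * C i j k))"
    unfolding sum_tidx_Suc_Cons[of _ n "Suc m"]
  proof (intro sum.cong refl)
    fix i ps assume "i \<in> {..<n}" "ps \<in> tidx n (Suc m)"
    then have "i < n" "map unit_vec ps \<noteq> []"
      by (auto dest: length_tidx)
    then show "(\<Prod>j<Suc (Suc m). x j ((i # ps) ! j)) * ?P (map unit_vec (i # ps)) k
        = x 0 i * (\<Prod>j<Suc m. ?x' j (ps ! j)) * (\<Sum>j<n. ?P (map unit_vec ps) j * C i j k)"
      by (simp add: prod.lessThan_Suc_shift mult_list_Cons bilinear_mult_unit_vec
          del: prod.lessThan_Suc)
  qed
  also have "\<dots> = (\<Sum>i<n. x 0 i * (\<Sum>j<n. C i j k
      * (\<Sum>ps\<in>tidx n (Suc m). (\<Prod>j<Suc m. ?x' j (ps ! j)) * ?P (map unit_vec ps) j)))"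
    by (simp add: sum_distrib_left sum_distrib_right algebra_simps sum.swap[of _ "tidx n (Suc m)"])
  also have "\<dots> = (\<Sum>i<n. x 0 i * (\<Sum>j<n. C i j k * ?P (map ?x' [0..<Suc m]) j))"
    using Suc.IH by (intro sum.cong refl arg_cong2[where f="(*)"]) auto
  also have "\<dots> = ?P (map x [0..<Suc (Suc m)]) k"
    by (simp add: map_upt_Suc[of x] mult_list_Cons bilinear_mult_def sum_distrib_left algebra_simps
        del: upt_Suc)
  finally show ?case .
qed

text \<open>Only multiplicativity of the norm is assumed; no unit element is needed.\<close>

locale composition_algebra =
  fixes n :: nat and C :: "nat \<Rightarrow> nat \<Rightarrow> nat \<Rightarrow> real"
  assumes dim_pos: "0 < n"
    and sqnorm_mult: "\<And>x y. sqnorm n (bilinear_mult n C x y) = sqnorm n x * sqnorm n y"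
begin

lemma sqnorm_mult_list:
  "xs \<noteq> [] \<Longrightarrow> (\<And>v. v \<in> set xs \<Longrightarrow> sqnorm n v = 1) \<Longrightarrow> sqnorm n (mult_list (bilinear_mult n C) xs) = 1"
proof (induction xs)
  case (Cons x xs)
  then show ?case by (cases "xs = []") (auto simp: mult_list_Cons sqnorm_mult)
qed simp

lemma frob_norm_product_tensor:
  "frob_norm n (Suc (Suc m)) (product_tensor n C (Suc (Suc m))) = sqrt (real n ^ Suc m)"
proof -
  have "sqnorm n (fiber (product_tensor n C (Suc (Suc m))) ps) = 1" if ps: "ps \<in> tidx n (Suc m)" for ps
  proof -
    have "sqnorm n (fiber (product_tensor n C (Suc (Suc m))) ps)
        = sqnorm n (mult_list (bilinear_mult n C) (map unit_vec ps))"
      by (rule sqnorm_cong) (simp add: fiber_product_tensor ps)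
    also have "\<dots> = 1"
      using ps by (intro sqnorm_mult_list) (auto simp: tidx_def sqnorm_unit_vec)
    finally show ?thesis .
  qed
  then have "(frob_norm n (Suc (Suc m)) (product_tensor n C (Suc (Suc m))))\<^sup>2 = real n ^ Suc m"
    by (simp add: frob_norm_sq card_tidx)
  then show ?thesis
    by (metis frob_norm_def real_sqrt_ge_zero real_sqrt_unique sum_nonneg zero_le_power2)
qed

lemma spec_norm_product_tensor_le:
  "spec_norm n (Suc (Suc m)) (product_tensor n C (Suc (Suc m))) \<le> 1"
proof (rule spec_norm_le[OF dim_pos])
  fix x assume x: "x \<in> unit_tuples n (Suc (Suc m))"
  let ?P = "mult_list (bilinear_mult n C) (map x [0..<Suc m])"
  have "contract n (Suc m) (product_tensor n C (Suc (Suc m))) x k = ?P k" if "k < n" for k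
    using mult_list_multilinear[OF that, where m=m and x=x and C=C]
    by (simp add: contract_def fiber_product_tensor[unfolded fiber_def] that mult.commute)
  then have "tensor_form n (Suc (Suc m)) (product_tensor n C (Suc (Suc m))) x
      = (\<Sum>k<n. x (Suc m) k * ?P k)"
    by (simp add: tensor_form_Suc)
  also have "\<dots> \<le> (\<Sum>k<n. ((x (Suc m) k)\<^sup>2 + (?P k)\<^sup>2) / 2)"
  proof (rule sum_mono)
    fix k
    show "x (Suc m) k * ?P k \<le> ((x (Suc m) k)\<^sup>2 + (?P k)\<^sup>2) / 2"
      using sum_squares_bound[of "x (Suc m) k" "?P k"] by (simp add: field_simps)
  qed
  also have "\<dots> = (sqnorm n (x (Suc m)) + sqnorm n ?P) / 2"
    by (simp add: sqnorm_def sum_divide_distrib[symmetric] sum.distrib)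
  also have "\<dots> = 1"
  proof -
    have "sqnorm n ?P = 1"
      using x by (intro sqnorm_mult_list) (auto simp: unit_tuples_def)
    then show ?thesis
      using x by (simp add: unit_tuples_def)
  qed
  finally show "tensor_form n (Suc (Suc m)) (product_tensor n C (Suc (Suc m))) x \<le> 1" .
qed

theorem best_r1_ratio_tensors:
  "best_r1_ratio n (Suc (Suc m)) (tensors n (Suc (Suc m))) = 1 / sqrt (real n ^ Suc m)"
proof (rule antisym)
  let ?d = "Suc (Suc m)" and ?T = "product_tensor n C (Suc (Suc m))"
  have T: "?T \<in> tensors n ?d" "?T \<noteq> (\<lambda>_. 0)"
    using frob_norm_product_tensor[of m] dim_pos
    by (auto simp: product_tensor_in_tensors frob_norm_def)
  have "best_r1_ratio n ?d (tensors n ?d) \<le> spec_norm n ?d ?T / frob_norm n ?d ?T"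
    by (rule best_r1_ratio_le[OF dim_pos T])
  also have "\<dots> \<le> 1 / sqrt (real n ^ Suc m)"
    using spec_norm_product_tensor_le[of m]
    by (simp add: frob_norm_product_tensor divide_right_mono)
  finally show "best_r1_ratio n ?d (tensors n ?d) \<le> 1 / sqrt (real n ^ Suc m)" .
  show "1 / sqrt (real n ^ Suc m) \<le> best_r1_ratio n ?d (tensors n ?d)"
  proof (rule best_r1_ratio_ge)
    show "tensors n ?d - {\<lambda>_. 0} \<noteq> {}"
      using T by auto
  qed (rule spec_frob_ratio_ge[OF dim_pos])
qed

end

text \<open>Octonion multiplication in a basis with \<open>e\<^sub>0 = 1\<close> and \<open>e\<^sub>i e\<^sub>j = \<plusminus>e\<^sub>i \<^sub>x\<^sub>o\<^sub>r \<^sub>j\<close> (signs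
  tabulated). Since \<open>e\<^sub>0,\<dots>,e\<^sub>3\<close> span the quaternions, the same constants serve for \<open>n = 4\<close>.\<close>

definition octonion_sign :: "real list list" where
  "octonion_sign =
    [[1, 1, 1, 1, 1, 1, 1, 1], [1,-1, 1,-1, 1,-1,-1, 1], [1,-1,-1, 1, 1, 1,-1,-1], [1, 1,-1,-1, 1,-1, 1,-1],
     [1,-1,-1,-1,-1, 1, 1, 1], [1, 1,-1, 1,-1,-1,-1, 1], [1, 1, 1,-1,-1, 1,-1,-1], [1,-1, 1, 1,-1,-1, 1,-1]]"

definition octonion_const :: "nat \<Rightarrow> nat \<Rightarrow> nat \<Rightarrow> real" where
  "octonion_const i j k = (if k = Bit_Operations.xor i j then octonion_sign ! i ! j else 0)"

lemma sqnorm_quaternion_mult: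
  "sqnorm 4 (bilinear_mult 4 octonion_const x y) = sqnorm 4 x * sqnorm 4 y"
  by (simp add: sqnorm_def bilinear_mult_def octonion_const_def octonion_sign_def
      lessThan_nat_numeral) algebra

lemma sqnorm_octonion_mult:
  "sqnorm 8 (bilinear_mult 8 octonion_const x y) = sqnorm 8 x * sqnorm 8 y"
  by (simp add: sqnorm_def bilinear_mult_def octonion_const_def octonion_sign_def
      lessThan_nat_numeral) algebra

interpretation quaternion: composition_algebra 4 octonion_const
  by unfold_locales (simp_all add: sqnorm_quaternion_mult)

interpretation octonion: composition_algebra 8 octonion_const
  by unfold_locales (simp_all add: sqnorm_octonion_mult)

section \<open>Symmetric tensors\<close>

definition two_prefix :: "nat \<Rightarrow> nat \<Rightarrow> nat \<Rightarrow> nat list" where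
  "two_prefix m a b = a # b # replicate (m - 2) 0"

definition two_slot_frame :: "(nat \<Rightarrow> real) \<Rightarrow> (nat \<Rightarrow> real) \<Rightarrow> nat \<Rightarrow> nat \<Rightarrow> real" where
  "two_slot_frame u v = (\<lambda>j. if j = 0 then u else if j = 1 then v else unit_vec 0)"

lemma two_prefix_in_tidx: "2 \<le> m \<Longrightarrow> a < n \<Longrightarrow> b < n \<Longrightarrow> two_prefix m a b \<in> tidx n m"
  by (auto simp: two_prefix_def tidx_def)

lemma two_prefix_eq_iff: "two_prefix m a b = two_prefix m a' b' \<longleftrightarrow> a = a' \<and> b = b'"
  by (simp add: two_prefix_def)

lemma sym_tensor_swap:
  assumes A: "A \<in> sym_tensors n d" and ix: "a # b # is \<in> tidx n d"
  shows "A (a # b # is) = A (b # a # is)"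
proof -
  have d: "d = Suc (Suc (length is))"
    using length_tidx[OF ix] by simp
  have "Transposition.transpose 0 1 permutes {..<d}"
    using d by (intro permutes_swap_id) auto
  then have "A (a # b # is) = A (map (\<lambda>k. (a # b # is) ! Transposition.transpose 0 1 k) [0..<d])"
    using A ix by (auto simp: sym_tensors_def)
  also have "map (\<lambda>k. (a # b # is) ! Transposition.transpose 0 1 k) [0..<d] = b # a # is"
  proof (rule nth_equalityI)
    fix i assume "i < length (map (\<lambda>k. (a # b # is) ! Transposition.transpose 0 1 k) [0..<d])"
    then show "map (\<lambda>k. (a # b # is) ! Transposition.transpose 0 1 k) [0..<d] ! i = (b # a # is) ! i"
      by (cases i; cases "i - 1") (simp_all add: Transposition.transpose_def)
  qed (simp add: d)
  finally show ?thesis .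
qed

lemma contract_slot_linear:
  assumes "j0 < m"
  shows "contract n m A (y(j0 := (\<lambda>i. a * v i + b * w i))) k
       = a * contract n m A (y(j0 := v)) k + b * contract n m A (y(j0 := w)) k"
proof -
  have "(\<Prod>j<m. (y(j0 := f)) j (ps ! j)) = f (ps ! j0) * (\<Prod>j\<in>{..<m}-{j0}. y j (ps ! j))"
    for f ps
  proof -
    have "(\<Prod>j<m. (y(j0 := f)) j (ps ! j))
        = f (ps ! j0) * (\<Prod>j\<in>{..<m}-{j0}. (y(j0 := f)) j (ps ! j))"
      using assms by (simp add: prod.remove[of "{..<m}" j0])
    also have "(\<Prod>j\<in>{..<m}-{j0}. (y(j0 := f)) j (ps ! j)) = (\<Prod>j\<in>{..<m}-{j0}. y j (ps ! j))"
      by (rule prod.cong) auto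
    finally show ?thesis .
  qed
  then show ?thesis
    by (simp add: contract_def sum.distrib sum_distrib_left algebra_simps)
qed

lemma contract_two_slot_unit_vecs:
  assumes "2 \<le> m" "a < n" "b < n"
  shows "contract n m A (two_slot_frame (unit_vec a) (unit_vec b)) = fiber A (two_prefix m a b)"
proof -
  have "contract n m A (two_slot_frame (unit_vec a) (unit_vec b))
      = contract n m A (\<lambda>j. unit_vec (two_prefix m a b ! j))"
    by (rule contract_cong) (auto simp: two_slot_frame_def two_prefix_def nth_Cons')
  then show ?thesis
    using assms by (simp add: contract_unit_vecs two_prefix_in_tidx)
qed

lemma contract_two_slot_symmetric:
  fixes \<alpha> \<beta> :: real
  assumes A: "A \<in> sym_tensors n (Suc m)" and m: "2 \<le> m" and pq: "p < n" "q < n" and k: "k < n"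
  defines "u \<equiv> \<lambda>i. \<alpha> * unit_vec p i + \<beta> * unit_vec q i"
  shows "contract n m A (two_slot_frame u u) k
       = \<alpha>\<^sup>2 * fiber A (two_prefix m p p) k + 2 * \<alpha> * \<beta> * fiber A (two_prefix m p q) k
         + \<beta>\<^sup>2 * fiber A (two_prefix m q q) k"
proof -
  have m0: "0 < m" and m1: "1 < m" using m by auto
  have slot0: "(two_slot_frame v w)(0 := v') = two_slot_frame v' w"
    and slot1: "(two_slot_frame v w)(1 := w') = two_slot_frame v w'" for v v' w w'
    by (auto simp: two_slot_frame_def)
  have lin0: "contract n m A (two_slot_frame u w) k
      = \<alpha> * contract n m A (two_slot_frame (unit_vec p) w) k
        + \<beta> * contract n m A (two_slot_frame (unit_vec q) w) k" for w
    using contract_slot_linear[OF m0, where A=A and y="two_slot_frame u w" and a=\<alpha>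
        and v="unit_vec p" and b=\<beta> and w="unit_vec q" and k=k]
    by (simp add: slot0 u_def)
  have lin1: "contract n m A (two_slot_frame v u) k
      = \<alpha> * contract n m A (two_slot_frame v (unit_vec p)) k
        + \<beta> * contract n m A (two_slot_frame v (unit_vec q)) k" for v
    using contract_slot_linear[OF m1, where A=A and y="two_slot_frame v u" and a=\<alpha>
        and v="unit_vec p" and b=\<beta> and w="unit_vec q" and k=k]
    by (simp only: slot1 u_def)
  have "two_prefix m q p @ [k] \<in> tidx n (Suc m)"
    using two_prefix_in_tidx[OF m pq(2,1)] k by (rule snoc_in_tidx)
  then have "fiber A (two_prefix m q p) k = fiber A (two_prefix m p q) k"
    using sym_tensor_swap[OF A, of q p "replicate (m - 2) 0 @ [k]"]
    by (simp add: fiber_def two_prefix_def)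
  then show ?thesis
    by (simp add: lin0 lin1 contract_two_slot_unit_vecs[OF m] pq power2_eq_square algebra_simps)
qed

lemma sqnorm_fiber_pair_le:
  assumes A: "A \<in> sym_tensors n (Suc m)" and m: "2 \<le> m" and pq: "p < n" "q < n" "p \<noteq> q"
  shows "sqnorm n (\<lambda>k. fiber A (two_prefix m p p) k + fiber A (two_prefix m q q) k)
     \<le> 4 * ((spec_norm n (Suc m) A)\<^sup>2 - sqnorm n (fiber A (two_prefix m p q)))"
proof -
  let ?s = "spec_norm n (Suc m) A"
  let ?x = "fiber A (two_prefix m p p)" and ?y = "fiber A (two_prefix m p q)"
    and ?z = "fiber A (two_prefix m q q)"
  define c :: real where "c = sqrt (1 / 2)"
  have c: "c\<^sup>2 = 1 / 2" by (simp add: c_def)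
  have probe: "sqnorm n (\<lambda>k. (?x k + ?z k) / 2 + \<sigma> * ?y k) \<le> ?s\<^sup>2" if \<sigma>: "\<sigma>\<^sup>2 = 1" for \<sigma>
  proof -
    define u where "u = (\<lambda>i. c * unit_vec p i + (\<sigma> * c) * unit_vec q i)"
    have "sqnorm n u = 1"
      using c \<sigma> by (simp add: u_def sqnorm_two_unit_vecs[OF pq] power_mult_distrib)
    then have "sqnorm n (contract n m A (two_slot_frame u u)) \<le> ?s\<^sup>2"
      using pq by (intro sqnorm_contract_le_spec_norm)
        (auto simp: two_slot_frame_def sqnorm_unit_vec)
    moreover have "contract n m A (two_slot_frame u u) k = (?x k + ?z k) / 2 + \<sigma> * ?y k"
      if "k < n" for k
    proof -
      have "2 * c * (\<sigma> * c) = \<sigma>" and "(\<sigma> * c)\<^sup>2 = 1 / 2"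
        using c \<sigma> by (simp_all add: power2_eq_square algebra_simps)
      with c show ?thesis
        using contract_two_slot_symmetric[OF A m pq(1,2) that, of c "\<sigma> * c"]
        by (simp only: u_def) (simp add: field_simps)
    qed
    ultimately show ?thesis
      by (metis (no_types, lifting) sqnorm_cong)
  qed
  have "(?x k + ?z k)\<^sup>2 / 2 + 2 * (?y k)\<^sup>2
      = ((?x k + ?z k) / 2 + 1 * ?y k)\<^sup>2 + ((?x k + ?z k) / 2 + (-1) * ?y k)\<^sup>2" for k
    by (simp add: power2_eq_square algebra_simps)
  then have "sqnorm n (\<lambda>k. ?x k + ?z k) / 2 + 2 * sqnorm n ?y
      = sqnorm n (\<lambda>k. (?x k + ?z k) / 2 + 1 * ?y k) + sqnorm n (\<lambda>k. (?x k + ?z k) / 2 + (-1) * ?y k)"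
    by (simp add: sqnorm_def sum_divide_distrib sum_distrib_left sum.distrib[symmetric])
  with probe[of 1] probe[of "-1"] show ?thesis
    by simp
qed

lemma sqnorm_le_pairwise_sums:
  "4 * sqnorm n a \<le> 3 * (sqnorm n (\<lambda>k. a k + b k) + sqnorm n (\<lambda>k. a k + c k) + sqnorm n (\<lambda>k. b k + c k))"
proof -
  have "4 * (a k)\<^sup>2 \<le> 3 * ((a k + b k)\<^sup>2 + (a k + c k)\<^sup>2 + (b k + c k)\<^sup>2)" for k
  proof -
    have "3 * ((a k + b k)\<^sup>2 + (a k + c k)\<^sup>2 + (b k + c k)\<^sup>2) - 4 * (a k)\<^sup>2
        = (b k - c k)\<^sup>2 + (a k + 2 * b k + c k)\<^sup>2 + (a k + b k + 2 * c k)\<^sup>2"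
      by (simp add: power2_eq_square algebra_simps)
    moreover have "0 \<le> (b k - c k)\<^sup>2 + (a k + 2 * b k + c k)\<^sup>2 + (a k + b k + 2 * c k)\<^sup>2"
      by simp
    ultimately show ?thesis
      by linarith
  qed
  then show ?thesis
    by (simp add: sqnorm_def sum_distrib_left sum.distrib[symmetric] sum_mono)
qed

text \<open>The deficits \<open>\<parallel>A\<parallel>\<^sub>2\<^sup>2 - \<parallel>fiber\<parallel>\<^sup>2\<close> sum to \<open>n\<^sup>m\<parallel>A\<parallel>\<^sub>2\<^sup>2 - \<parallel>A\<parallel>\<^sub>F\<^sup>2\<close>; those of the
  fibers at \<open>(0,0,\<dots>)\<close>, \<open>(0,1,\<dots>)\<close>, \<open>(0,2,\<dots>)\<close>, \<open>(1,2,\<dots>)\<close> already add up to at least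
  \<open>\<parallel>A\<parallel>\<^sub>2\<^sup>2/3\<close>.\<close>

lemma frob_norm_sq_sym_le:
  assumes n: "3 \<le> n" and m: "2 \<le> m" and A: "A \<in> sym_tensors n (Suc m)"
  shows "3 * (frob_norm n (Suc m) A)\<^sup>2 \<le> (3 * real n ^ m - 1) * (spec_norm n (Suc m) A)\<^sup>2"
proof -
  let ?s = "spec_norm n (Suc m) A" and ?F = "frob_norm n (Suc m) A"
  let ?P = "two_prefix m"
  define \<delta> where "\<delta> ps = ?s\<^sup>2 - sqnorm n (fiber A ps)" for ps
  let ?a = "fiber A (?P 0 0)" and ?b = "fiber A (?P 1 1)" and ?c = "fiber A (?P 2 2)"
  have P: "?P a b \<in> tidx n m" if "a \<le> 2" "b \<le> 2" for a b
    using two_prefix_in_tidx[OF m] n that by auto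
  have "\<delta> (?P 0 0) + \<delta> (?P 0 1) + \<delta> (?P 0 2) + \<delta> (?P 1 2) = (\<Sum>ps\<in>{?P 0 0, ?P 0 1, ?P 0 2, ?P 1 2}. \<delta> ps)"
    by (simp add: two_prefix_eq_iff)
  also have "\<dots> \<le> (\<Sum>ps\<in>tidx n m. \<delta> ps)"
    by (rule sum_mono2[OF finite_tidx]) (auto simp: P \<delta>_def sqnorm_fiber_le_spec_norm)
  also have "\<dots> = real n ^ m * ?s\<^sup>2 - ?F\<^sup>2"
    by (simp add: \<delta>_def sum_subtractf frob_norm_sq card_tidx)
  finally have total: "\<delta> (?P 0 0) + \<delta> (?P 0 1) + \<delta> (?P 0 2) + \<delta> (?P 1 2) \<le> real n ^ m * ?s\<^sup>2 - ?F\<^sup>2" .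
  have "0 \<le> \<delta> (?P 0 0)"
    using P by (simp add: \<delta>_def sqnorm_fiber_le_spec_norm)
  moreover have "sqnorm n (\<lambda>k. ?a k + ?b k) \<le> 4 * \<delta> (?P 0 1)"
    using sqnorm_fiber_pair_le[OF A m, of 0 1] n by (simp add: \<delta>_def)
  moreover have "sqnorm n (\<lambda>k. ?a k + ?c k) \<le> 4 * \<delta> (?P 0 2)"
    using sqnorm_fiber_pair_le[OF A m, of 0 2] n by (simp add: \<delta>_def)
  moreover have "sqnorm n (\<lambda>k. ?b k + ?c k) \<le> 4 * \<delta> (?P 1 2)"
    using sqnorm_fiber_pair_le[OF A m, of 1 2] n by (simp add: \<delta>_def)
  moreover note sqnorm_le_pairwise_sums[of n ?a ?b ?c]
  ultimately show ?thesis
    using total by (simp add: \<delta>_def algebra_simps)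
qed

lemma spec_frob_ratio_sym_ge:
  assumes n: "3 \<le> n" and m: "2 \<le> m" and A: "A \<in> sym_tensors n (Suc m)" "A \<noteq> (\<lambda>_. 0)"
  shows "sqrt (3 / (3 * real n ^ m - 1)) \<le> spec_norm n (Suc m) A / frob_norm n (Suc m) A"
proof -
  let ?s = "spec_norm n (Suc m) A" and ?F = "frob_norm n (Suc m) A" and ?N = "real n ^ m"
  have F: "0 < ?F"
    using A by (intro frob_norm_pos) (auto simp: sym_tensors_def)
  have s: "0 \<le> ?s"
    using n by (intro spec_norm_nonneg) auto
  have N: "1 \<le> ?N"
    using n by simp
  have "3 / (3 * ?N - 1) \<le> (?s / ?F)\<^sup>2"
    using frob_norm_sq_sym_le[OF n m A(1)] F N by (simp add: power_divide field_simps)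
  then have "sqrt (3 / (3 * ?N - 1)) \<le> sqrt ((?s / ?F)\<^sup>2)"
    by (rule real_sqrt_le_mono)
  then show ?thesis
    using s F by simp
qed

lemma indicator_tidx_in_sym_tensors: "(\<lambda>is. if is \<in> tidx n d then 1 else 0) \<in> sym_tensors n d"
proof -
  have "map (\<lambda>k. ix ! p k) [0..<d] \<in> tidx n d" if "ix \<in> tidx n d" "p permutes {..<d}" for ix p
    using that permutes_in_image[OF that(2)] by (auto simp: tidx_def)
  then show ?thesis
    by (auto simp: sym_tensors_def tensors_def)
qed

theorem best_r1_ratio_sym_tensors_gt:
  assumes n: "3 \<le> n" and m: "2 \<le> m"
  shows "1 / sqrt (real n ^ m) < best_r1_ratio n (Suc m) (sym_tensors n (Suc m))"
proof -
  let ?N = "real n ^ m"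
  have "replicate (Suc m) 0 \<in> tidx n (Suc m)"
    using n by (auto simp: tidx_def)
  then have "(\<lambda>is. if is \<in> tidx n (Suc m) then 1 else 0) \<in> sym_tensors n (Suc m) - {\<lambda>_. 0}"
    using indicator_tidx_in_sym_tensors by (auto simp: fun_eq_iff)
  then have "sqrt (3 / (3 * ?N - 1)) \<le> best_r1_ratio n (Suc m) (sym_tensors n (Suc m))"
    using spec_frob_ratio_sym_ge[OF n m] by (intro best_r1_ratio_ge) auto
  moreover have "1 / sqrt ?N < sqrt (3 / (3 * ?N - 1))"
  proof -
    have "1 \<le> ?N" using n by simp
    then have "1 / ?N < 3 / (3 * ?N - 1)"
      by (simp add: divide_simps)
    then show ?thesis
      by (metis real_sqrt_less_mono real_sqrt_divide real_sqrt_one)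
  qed
  ultimately show ?thesis
    by simp
qed

theorem corollary1p7:
  fixes d :: nat
  assumes "d \<ge> 3"
  shows "best_r1_ratio 4 d (tensors 4 d) = 1 / sqrt (4 ^ (d - 1))
       \<and> 1 / sqrt (4 ^ (d - 1)) < best_r1_ratio 4 d (sym_tensors 4 d)
       \<and> best_r1_ratio 8 d (tensors 8 d) = 1 / sqrt (8 ^ (d - 1))
       \<and> 1 / sqrt (8 ^ (d - 1)) < best_r1_ratio 8 d (sym_tensors 8 d)"
proof -
  define m where "m = d - 2"
  have d: "d = Suc (Suc m)" and m: "2 \<le> Suc m"
    using assms by (auto simp: m_def)
  show ?thesis
    using quaternion.best_r1_ratio_tensors[of m] octonion.best_r1_ratio_tensors[of m]
      best_r1_ratio_sym_tensors_gt[OF _ m, of 4] best_r1_ratio_sym_tensors_gt[OF _ m, of 8]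
    by (simp add: d)
qed

end
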